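(* Let $(W,S)$ be a Coxeter system with $S$ finite such that all elements of $Q_W$ are conjugate in $W$ (i.e. $c(W)=1$). Identify $C_W$ with $\mathbb{Z}$ via $e_s^2\mapsto1$ ($s\in S$). Define $\tau_\rho:W\times W\to\mathbb{Z}$ by $\tau_\rho(w_1,w_2)=1$ if $\ell(w_1)$ and $\ell(w_2)$ are both odd, and $\tau_\rho(w_1,w_2)=0$ otherwise, where $\ell$ is the length function with respect to $S$. Then $\tau_\rho$ is a normalized $2$-cocycle and $[\tau_\rho]=u_\phi\in H^2(W,\mathbb{Z})$, where $u_\phi$ is the class of the central extension $0\to\mathbb{Z}\to\operatorname{Ad}(Q_W)\xrightarrow{\phi}W\to1$.
   Context: A Coxeter system $(W,S)$: $S$ finite, $m:S\times S\to\mathbb{N}\cup\{\infty\}$ with $m(s,s)=1$, $2\le m(s,t)=m(t,s)\le\infty$ for $s\ne t$, $W=\langle s\in S\mid (st)^{m(s,t)}=1\ (m(s,t)<\infty)\rangle$. The Coxeter quandle $Q_W=\bigcup_{w\in W}w^{-1}Sw$ has operation $x\ast y=yxy$; $\operatorname{Ad}(Q_W)=\langle e_x\ (x\in Q_W)\mid e_y^{-1}e_xe_y=e_{x\ast y}\rangle$; $\phi:\operatorname{Ad}(Q_W)\to W$ is $e_x\mapsto x$ and $C_W=\ker\phi$, a central subgroup. $c(W)$ is the number of $W$-conjugacy classes in $Q_W$. When $c(W)=1$, $C_W$ is infinite cyclic generated by $e_s^2$, and $e_s^2$ is the same element for all $s\in S$, so the identification is well defined. *)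

theory Defs
  imports "HOL-Algebra.Algebra" "HOL-Library.Extended_Nat"
begin

definition word_eval :: "('g, 'm) monoid_scheme \<Rightarrow> ('b \<Rightarrow> 'g) \<Rightarrow> 'b list \<Rightarrow> 'g" where
  "word_eval G evl w = foldr (\<lambda>b acc. evl b \<otimes>\<^bsub>G\<^esub> acc) w \<one>\<^bsub>G\<^esub>"

definition word_rel :: "'b list set \<Rightarrow> 'b list \<Rightarrow> 'b list \<Rightarrow> bool" where
  "word_rel R = equivclp (\<lambda>x y. \<exists>u v r. r \<in> R \<and> x = u @ r @ v \<and> y = u @ v)"

text \<open>G is presented by letters Gens (interpreted via evl) and relators R. The relators
  include the inverse-cancellation relators of each letter, so this monoid
  presentation is a group presentation.\<close>
definition presentation :: "('g, 'm) monoid_scheme \<Rightarrow> 'b set \<Rightarrow> ('b \<Rightarrow> 'g) \<Rightarrow> 'b list set \<Rightarrow> bool" where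
  "presentation G Gens evl R \<longleftrightarrow> group G \<and> evl ` Gens \<subseteq> carrier G
     \<and> (\<forall>r\<in>R. set r \<subseteq> Gens \<and> word_eval G evl r = \<one>\<^bsub>G\<^esub>)
     \<and> (\<forall>g\<in>carrier G. \<exists>w. set w \<subseteq> Gens \<and> word_eval G evl w = g)
     \<and> (\<forall>w. set w \<subseteq> Gens \<and> word_eval G evl w = \<one>\<^bsub>G\<^esub> \<longrightarrow> word_rel R w [])"

definition coxeter_relators :: "'a set \<Rightarrow> ('a \<Rightarrow> 'a \<Rightarrow> enat) \<Rightarrow> 'a list set" where
  "coxeter_relators S m = {concat (replicate k [s, t]) | s t k. s \<in> S \<and> t \<in> S \<and> m s t = enat k}"

text \<open>(W,S) is a Coxeter system with Coxeter matrix m (m s t = \<infinity> means no relation).\<close>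
definition coxeter_system :: "('a, 'm) monoid_scheme \<Rightarrow> 'a set \<Rightarrow> ('a \<Rightarrow> 'a \<Rightarrow> enat) \<Rightarrow> bool" where
  "coxeter_system W S m \<longleftrightarrow> S \<subseteq> carrier W
     \<and> (\<forall>s\<in>S. m s s = 1)
     \<and> (\<forall>s\<in>S. \<forall>t\<in>S. s \<noteq> t \<longrightarrow> m s t = m t s \<and> 2 \<le> m s t)
     \<and> presentation W S id (coxeter_relators S m)"

definition coxeter_length :: "('a, 'm) monoid_scheme \<Rightarrow> 'a set \<Rightarrow> 'a \<Rightarrow> nat" where
  "coxeter_length W S w = (LEAST n. \<exists>ws. length ws = n \<and> set ws \<subseteq> S \<and> word_eval W id ws = w)"

definition coxeter_quandle :: "('a, 'm) monoid_scheme \<Rightarrow> 'a set \<Rightarrow> 'a set" where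
  "coxeter_quandle W S = {inv\<^bsub>W\<^esub> w \<otimes>\<^bsub>W\<^esub> s \<otimes>\<^bsub>W\<^esub> w | w s. w \<in> carrier W \<and> s \<in> S}"

definition quandle_op :: "('a, 'm) monoid_scheme \<Rightarrow> 'a \<Rightarrow> 'a \<Rightarrow> 'a" where
  "quandle_op W x y = y \<otimes>\<^bsub>W\<^esub> x \<otimes>\<^bsub>W\<^esub> y"

definition coxeter_c :: "('a, 'm) monoid_scheme \<Rightarrow> 'a set \<Rightarrow> nat" where
  "coxeter_c W S = card ((\<lambda>x. {inv\<^bsub>W\<^esub> w \<otimes>\<^bsub>W\<^esub> x \<otimes>\<^bsub>W\<^esub> w | w. w \<in> carrier W}) ` coxeter_quandle W S)"

text \<open>Letter (x, True) stands for e_x, (x, False) for e_x inverse.\<close>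
definition ad_letter :: "('b, 'n) monoid_scheme \<Rightarrow> ('a \<Rightarrow> 'b) \<Rightarrow> 'a \<times> bool \<Rightarrow> 'b" where
  "ad_letter A e l = (if snd l then e (fst l) else inv\<^bsub>A\<^esub> (e (fst l)))"

definition ad_relators :: "('a, 'm) monoid_scheme \<Rightarrow> 'a set \<Rightarrow> ('a \<times> bool) list set" where
  "ad_relators W Q = {[(x, b), (x, \<not> b)] | x b. x \<in> Q}
     \<union> {[(y, False), (x, True), (y, True), (quandle_op W x y, False)] | x y. x \<in> Q \<and> y \<in> Q}"

text \<open>A together with e : Q_W \<rightarrow> A is the adjoint group Ad(Q_W) =
  < e_x (x in Q_W) | e_y^-1 e_x e_y = e_(x*y) >.\<close>
definition adjoint_group :: "('a, 'm) monoid_scheme \<Rightarrow> 'a set \<Rightarrow> ('b, 'n) monoid_scheme \<Rightarrow> ('a \<Rightarrow> 'b) \<Rightarrow> bool" where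
  "adjoint_group W S A e \<longleftrightarrow>
     presentation A (coxeter_quandle W S \<times> UNIV) (ad_letter A e) (ad_relators W (coxeter_quandle W S))"

definition normalized_2cocycle :: "('a, 'm) monoid_scheme \<Rightarrow> ('a \<Rightarrow> 'a \<Rightarrow> int) \<Rightarrow> bool" where
  "normalized_2cocycle W f \<longleftrightarrow>
     (\<forall>a\<in>carrier W. \<forall>b\<in>carrier W. \<forall>c\<in>carrier W.
        f b c - f (a \<otimes>\<^bsub>W\<^esub> b) c + f a (b \<otimes>\<^bsub>W\<^esub> c) - f a b = 0)
     \<and> (\<forall>a\<in>carrier W. f \<one>\<^bsub>W\<^esub> a = 0 \<and> f a \<one>\<^bsub>W\<^esub> = 0)"

text \<open>Equality of classes in H^2(W,Z): difference is a coboundary.\<close>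
definition cohomologous :: "('a, 'm) monoid_scheme \<Rightarrow> ('a \<Rightarrow> 'a \<Rightarrow> int) \<Rightarrow> ('a \<Rightarrow> 'a \<Rightarrow> int) \<Rightarrow> bool" where
  "cohomologous W f g \<longleftrightarrow> (\<exists>c :: 'a \<Rightarrow> int. \<forall>a\<in>carrier W. \<forall>b\<in>carrier W.
      f a b - g a b = c a + c b - c (a \<otimes>\<^bsub>W\<^esub> b))"

text \<open>Cocycle of the central extension w.r.t. a set-theoretic section sigma, where the
  kernel is identified with Z via n \<mapsto> z^n:
  sigma(a) sigma(b) = z^{f(a,b)} sigma(ab).\<close>
definition extension_cocycle :: "('a, 'm) monoid_scheme \<Rightarrow> ('b, 'n) monoid_scheme \<Rightarrow> 'b \<Rightarrow> ('a \<Rightarrow> 'b) \<Rightarrow> 'a \<Rightarrow> 'a \<Rightarrow> int" where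
  "extension_cocycle W A z \<sigma> a b =
     (THE n :: int. \<sigma> a \<otimes>\<^bsub>A\<^esub> \<sigma> b = (z [^]\<^bsub>A\<^esub> n) \<otimes>\<^bsub>A\<^esub> \<sigma> (a \<otimes>\<^bsub>W\<^esub> b))"

definition tau_rho :: "('a, 'm) monoid_scheme \<Rightarrow> 'a set \<Rightarrow> 'a \<Rightarrow> 'a \<Rightarrow> int" where
  "tau_rho W S w1 w2 = (if odd (coxeter_length W S w1) \<and> odd (coxeter_length W S w2) then 1 else 0)"

end

theory Submission
  imports Defs
begin

text \<open>
  Since all reflections are conjugate in \<open>W\<close>, every generator \<open>e\<^sub>x\<close> of \<open>Ad(Q\<^sub>W)\<close> squares to
  the central element \<open>z = e\<^sub>s\<^sub>0\<^sup>2\<close>. Hence every element of \<open>Ad(Q\<^sub>W)\<close> is \<open>z\<^sup>n\<close> times the lift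
  of a word in \<open>S\<close>, and since the lift of each Coxeter relator \<open>(st)\<^sup>m\<close> is a power of \<open>z\<close>, the
  kernel of \<open>\<phi>\<close> consists of the powers of \<open>z\<close>. The exponent sum in the generators \<open>e\<^sub>x\<^sup>\<plusminus>\<^sup>1\<close> is
  a homomorphism \<open>deg : Ad(Q\<^sub>W) \<rightarrow> \<int>\<close> with \<open>deg z = 2\<close>, so \<open>z\<close> has infinite order, and
  \<open>deg g\<close> has the parity of the length of \<open>\<phi> g\<close>. For a section \<open>\<sigma>\<close> the extension cocycle
  \<open>f\<close> therefore satisfies \<open>2f = \<delta>(deg \<circ> \<sigma>)\<close>, while \<open>2\<tau>\<^sub>\<rho> = \<delta>p\<close> where \<open>p w\<close> is \<open>1\<close> for
  \<open>w\<close> of odd length and \<open>0\<close> otherwise. Thus \<open>\<tau>\<^sub>\<rho> - f = \<delta>((p - deg \<circ> \<sigma>) / 2)\<close>, the division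
  being exact.
\<close>

lemma (in group) mult_inv_cancel_left [simp]:
  "x \<in> carrier G \<Longrightarrow> y \<in> carrier G \<Longrightarrow> x \<otimes> (inv x \<otimes> y) = y"
  by (simp flip: m_assoc)

lemma (in group) inv_mult_cancel_left [simp]:
  "x \<in> carrier G \<Longrightarrow> y \<in> carrier G \<Longrightarrow> inv x \<otimes> (x \<otimes> y) = y"
  by (simp flip: m_assoc)

lemma (in group) inv_commute:
  assumes "a \<otimes> g = g \<otimes> a" "a \<in> carrier G" "g \<in> carrier G"
  shows "inv a \<otimes> g = g \<otimes> inv a"
proof -
  have "a \<otimes> (g \<otimes> inv a) = (a \<otimes> g) \<otimes> inv a" using assms(2,3) by (simp add: m_assoc)
  also have "\<dots> = (g \<otimes> a) \<otimes> inv a" by (simp only: assms(1))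
  also have "\<dots> = g" using assms(2,3) by (simp add: m_assoc)
  finally show ?thesis using assms inv_solve_left'[of "g \<otimes> inv a" a g] by simp
qed

lemma (in group) conj_eq_imp_commute:
  assumes "inv c \<otimes> a \<otimes> c = a" "c \<in> carrier G" "a \<in> carrier G"
  shows "c \<otimes> a = a \<otimes> c"
proof -
  have "a \<otimes> c = c \<otimes> (inv c \<otimes> a \<otimes> c)" using assms(2,3) by (simp add: m_assoc)
  then show ?thesis using assms(1) by simp
qed

lemma (in group) int_pow_commute:
  assumes "a \<otimes> g = g \<otimes> a" "a \<in> carrier G" "g \<in> carrier G"
  shows "a [^] (n::int) \<otimes> g = g \<otimes> a [^] n"
proof -
  have pow: "a [^] k \<otimes> g = g \<otimes> a [^] k" for k :: nat
    by (rule group_commutes_pow[OF assms])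
  have "inv (a [^] k) \<otimes> g = g \<otimes> inv (a [^] k)" for k :: nat
    by (rule inv_commute[OF pow]) (use assms in auto)
  with pow show ?thesis by (simp only: int_pow_def2 split: if_split) blast
qed

section \<open>Words in presented groups\<close>

lemma word_eval_Nil [simp]: "word_eval G f [] = \<one>\<^bsub>G\<^esub>"
  by (simp add: word_eval_def)

lemma word_eval_Cons [simp]: "word_eval G f (x # w) = f x \<otimes>\<^bsub>G\<^esub> word_eval G f w"
  by (simp add: word_eval_def)

lemma (in monoid) word_eval_closed:
  "f ` set w \<subseteq> carrier G \<Longrightarrow> word_eval G f w \<in> carrier G"
  by (induction w) auto

lemma (in monoid) word_eval_append:
  assumes "f ` set u \<subseteq> carrier G" "f ` set v \<subseteq> carrier G"
  shows "word_eval G f (u @ v) = word_eval G f u \<otimes> word_eval G f v"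
  using assms(1) by (induction u) (auto simp: m_assoc word_eval_closed assms(2))

lemma (in monoid) word_eval_commute:
  assumes "c \<in> carrier G" "f ` set w \<subseteq> carrier G" "\<And>x. x \<in> set w \<Longrightarrow> c \<otimes> f x = f x \<otimes> c"
  shows "c \<otimes> word_eval G f w = word_eval G f w \<otimes> c"
  using assms(2,3)
proof (induction w)
  case (Cons x w)
  then have "f x \<in> carrier G" "word_eval G f w \<in> carrier G" by (auto intro: word_eval_closed)
  with Cons assms(1) show ?case by (simp add: m_assoc[symmetric]) (simp add: m_assoc)
qed (simp add: assms(1))

lemma presentation_central:
  assumes G: "presentation G Gens evl R" and c: "c \<in> carrier G" "g \<in> carrier G"
    and gens: "\<And>b. b \<in> Gens \<Longrightarrow> c \<otimes>\<^bsub>G\<^esub> evl b = evl b \<otimes>\<^bsub>G\<^esub> c"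
  shows "c \<otimes>\<^bsub>G\<^esub> g = g \<otimes>\<^bsub>G\<^esub> c"
proof -
  interpret group G using G by (simp add: presentation_def)
  obtain u where u: "set u \<subseteq> Gens" "word_eval G evl u = g" using G c by (auto simp: presentation_def)
  have "evl ` set u \<subseteq> carrier G" using G u by (auto simp: presentation_def)
  then show ?thesis using word_eval_commute[OF c(1)] u gens by blast
qed

lemma word_rel_invariant:
  assumes "\<And>u v r. r \<in> R \<Longrightarrow> F (u @ r @ v) = F (u @ v)" and "word_rel R x y"
  shows "F x = F y"
  using assms(2) unfolding word_rel_def equivclp_def
proof (induction rule: rtranclp_induct)
  case (step y z)
  then show ?case using assms(1) by (auto simp: symclp_def)
qed simp

lemma presentation_word_invariant:
  assumes G: "presentation G Gens evl R"
    and F: "\<And>u v r. r \<in> R \<Longrightarrow> F (u @ r @ v) = F (u @ v)"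
    and u: "set u \<subseteq> Gens" and v: "set v \<subseteq> Gens"
    and uv: "word_eval G evl u = word_eval G evl v"
  obtains w where "F (u @ w) = F []" "F (v @ w) = F []"
proof -
  interpret group G using G by (simp add: presentation_def)
  have closed: "evl ` set x \<subseteq> carrier G" if "set x \<subseteq> Gens" for x
    using G that by (auto simp: presentation_def)
  have "inv\<^bsub>G\<^esub> (word_eval G evl v) \<in> carrier G" using v closed by (simp add: word_eval_closed)
  then obtain w where w: "set w \<subseteq> Gens" "word_eval G evl w = inv\<^bsub>G\<^esub> (word_eval G evl v)"
    using G by (auto simp: presentation_def)
  have *: "F (x @ w) = F []" if x: "set x \<subseteq> Gens" "word_eval G evl x = word_eval G evl v" for x
  proof (rule word_rel_invariant[OF F])
    have "word_eval G evl (x @ w) = \<one>\<^bsub>G\<^esub>"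
      using x w v closed by (simp add: word_eval_append word_eval_closed)
    then show "word_rel R (x @ w) []" using G x w by (simp add: presentation_def)
  qed
  show thesis by (rule that) (use * u v uv in auto)
qed

definition presentation_weight ::
    "('g, 'm) monoid_scheme \<Rightarrow> 'b set \<Rightarrow> ('b \<Rightarrow> 'g) \<Rightarrow> ('b \<Rightarrow> 'c::ab_group_add) \<Rightarrow> 'g \<Rightarrow> 'c" where
  "presentation_weight G Gens evl wt g =
     sum_list (map wt (SOME u. set u \<subseteq> Gens \<and> word_eval G evl u = g))"

lemma presentation_weight_word_eval:
  assumes G: "presentation G Gens evl R" and R: "\<And>r. r \<in> R \<Longrightarrow> sum_list (map wt r) = 0"
    and u: "set u \<subseteq> Gens"
  shows "presentation_weight G Gens evl wt (word_eval G evl u) = sum_list (map wt u)"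
proof -
  define v where "v = (SOME v. set v \<subseteq> Gens \<and> word_eval G evl v = word_eval G evl u)"
  have "set v \<subseteq> Gens \<and> word_eval G evl v = word_eval G evl u"
    unfolding v_def by (rule someI_ex) (use u in blast)
  then have v: "set v \<subseteq> Gens" "word_eval G evl v = word_eval G evl u" by auto
  obtain w where "sum_list (map wt (v @ w)) = 0" "sum_list (map wt (u @ w)) = 0"
    using presentation_word_invariant[OF G _ v(1) u v(2), of "\<lambda>w. sum_list (map wt w)"] R by auto
  then show ?thesis unfolding presentation_weight_def v_def[symmetric] by (metis add_right_cancel map_append sum_list_append)
qed

lemma presentation_weight_mult:
  assumes G: "presentation G Gens evl R" and R: "\<And>r. r \<in> R \<Longrightarrow> sum_list (map wt r) = 0"
    and gh: "g \<in> carrier G" "h \<in> carrier G"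
  shows "presentation_weight G Gens evl wt (g \<otimes>\<^bsub>G\<^esub> h)
           = presentation_weight G Gens evl wt g + presentation_weight G Gens evl wt h"
proof -
  interpret group G using G by (simp add: presentation_def)
  obtain u v where uv: "set u \<subseteq> Gens" "word_eval G evl u = g" "set v \<subseteq> Gens" "word_eval G evl v = h"
    using G gh by (auto simp: presentation_def) metis
  have "evl ` set u \<subseteq> carrier G" "evl ` set v \<subseteq> carrier G" using G uv by (auto simp: presentation_def)
  then have "g \<otimes>\<^bsub>G\<^esub> h = word_eval G evl (u @ v)" using uv by (simp add: word_eval_append)
  then show ?thesis
    using uv presentation_weight_word_eval[OF G R uv(1)] presentation_weight_word_eval[OF G R uv(3)]
      presentation_weight_word_eval[OF G R, of "u @ v"] by simp
qed

fun alternating :: "'a \<Rightarrow> 'a \<Rightarrow> nat \<Rightarrow> 'a list" where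
  "alternating x y 0 = []"
| "alternating x y (Suc n) = x # alternating y x n"

lemma alternating_Suc_snoc: "alternating x y (Suc n) = alternating x y n @ [if even n then x else y]"
  by (induction n arbitrary: x y) auto

lemma set_alternating: "set (alternating x y n) \<subseteq> {x, y}"
  by (induction n arbitrary: x y) auto

lemma alternating_odd_Suc:
  "alternating x y (2 * Suc j + 1) = x # alternating y x (2 * j + 1) @ [x]"
proof -
  have "2 * Suc j + 1 = Suc (Suc (2 * j + 1))" by simp
  then show ?thesis by (simp only: alternating.simps(2)[of x y] alternating_Suc_snoc[of y x]) simp
qed

lemma concat_replicate_alternating: "concat (replicate k [s, t]) = alternating s t (2 * k)"
  by (induction k) auto

section \<open>Coxeter systems\<close>

locale coxeter =
  fixes W :: "('a, 'm) monoid_scheme" and S :: "'a set" and m :: "'a \<Rightarrow> 'a \<Rightarrow> enat"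
  assumes coxeter_system: "coxeter_system W S m"

sublocale coxeter \<subseteq> W: group W
  using coxeter_system by (simp add: coxeter_system_def presentation_def)

context coxeter
begin

abbreviation "evW u \<equiv> word_eval W id u"
abbreviation "Q \<equiv> coxeter_quandle W S"
abbreviation "len \<equiv> coxeter_length W S"

lemma presentation_W: "presentation W S id (coxeter_relators S m)"
  using coxeter_system by (simp add: coxeter_system_def)

lemma gens_closed: "S \<subseteq> carrier W"
  using coxeter_system by (simp add: coxeter_system_def)

lemma evW_closed: "set u \<subseteq> carrier W \<Longrightarrow> evW u \<in> carrier W"
  by (simp add: W.word_eval_closed)

lemma evW_append: "set u \<subseteq> carrier W \<Longrightarrow> set v \<subseteq> carrier W \<Longrightarrow> evW (u @ v) = evW u \<otimes>\<^bsub>W\<^esub> evW v"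
  by (simp add: W.word_eval_append)

lemma exists_word: "w \<in> carrier W \<Longrightarrow> \<exists>u. set u \<subseteq> S \<and> evW u = w"
  using presentation_W by (simp add: presentation_def)

lemma coxeter_relator: "r \<in> coxeter_relators S m \<Longrightarrow> set r \<subseteq> S \<and> evW r = \<one>\<^bsub>W\<^esub>"
  using presentation_W by (simp add: presentation_def)

lemma gen_square: assumes "s \<in> S" shows "s \<otimes>\<^bsub>W\<^esub> s = \<one>\<^bsub>W\<^esub>"
proof -
  have "m s s = enat 1" using coxeter_system assms by (simp add: coxeter_system_def one_enat_def)
  then have "[s, s] \<in> coxeter_relators S m"
    unfolding coxeter_relators_def using assms
    by (intro CollectI exI[of _ s] exI[of _ 1]) (simp add: one_enat_def)
  then have "evW [s, s] = \<one>\<^bsub>W\<^esub>" using coxeter_relator by blast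
  then show ?thesis using assms gens_closed by auto
qed

lemma even_length_eval_eq:
  assumes "set u \<subseteq> S" "set v \<subseteq> S" "evW u = evW v"
  shows "even (length u) = even (length v)"
proof -
  have "even (length r)" if "r \<in> coxeter_relators S m" for r
    using that unfolding coxeter_relators_def by (auto simp: length_concat sum_list_replicate)
  then obtain w where "even (length (u @ w))" "even (length (v @ w))"
    using presentation_word_invariant[OF presentation_W _ assms, of "\<lambda>w. even (length w)"] by auto
  then show ?thesis by auto
qed

lemma coxeter_length_word:
  assumes "w \<in> carrier W"
  obtains u where "set u \<subseteq> S" "evW u = w" "length u = len w"
proof -
  let ?P = "\<lambda>n. \<exists>u. length u = n \<and> set u \<subseteq> S \<and> evW u = w"
  have "?P (Least ?P)" by (rule LeastI_ex) (use exists_word[OF assms] in blast)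
  then show thesis using that unfolding coxeter_length_def by blast
qed

lemma even_coxeter_length_eval:
  assumes "set u \<subseteq> S"
  shows "even (len (evW u)) = even (length u)"
proof -
  have "evW u \<in> carrier W" using assms gens_closed by (intro evW_closed) auto
  then obtain v where "set v \<subseteq> S" "evW v = evW u" "length v = len (evW u)"
    by (rule coxeter_length_word)
  then show ?thesis using even_length_eval_eq[OF _ assms] by metis
qed

lemma coxeter_length_one: "len \<one>\<^bsub>W\<^esub> = 0"
  unfolding coxeter_length_def by (rule Least_eq_0) (auto intro: exI[of _ "[]"])

lemma even_coxeter_length_mult:
  assumes "a \<in> carrier W" "b \<in> carrier W"
  shows "even (len (a \<otimes>\<^bsub>W\<^esub> b)) = (even (len a) = even (len b))"
proof -
  obtain u v where "set u \<subseteq> S" "evW u = a" "set v \<subseteq> S" "evW v = b"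
    using exists_word assms by metis
  then show ?thesis using gens_closed even_coxeter_length_eval[of u] even_coxeter_length_eval[of v]
      even_coxeter_length_eval[of "u @ v"] by (auto simp: evW_append)
qed

lemma double_tau_rho:
  assumes "a \<in> carrier W" "b \<in> carrier W"
  shows "2 * tau_rho W S a b = of_bool (odd (len a)) + of_bool (odd (len b)) - of_bool (odd (len (a \<otimes>\<^bsub>W\<^esub> b)))"
  using even_coxeter_length_mult[OF assms] by (auto simp: tau_rho_def)

lemma tau_rho_normalized_2cocycle: "normalized_2cocycle W (tau_rho W S)"
  unfolding normalized_2cocycle_def
proof (intro conjI ballI)
  fix a b c assume abc: "a \<in> carrier W" "b \<in> carrier W" "c \<in> carrier W"
  then show "tau_rho W S b c - tau_rho W S (a \<otimes>\<^bsub>W\<^esub> b) c + tau_rho W S a (b \<otimes>\<^bsub>W\<^esub> c) - tau_rho W S a b = 0"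
    using double_tau_rho[of b c] double_tau_rho[of "a \<otimes>\<^bsub>W\<^esub> b" c] double_tau_rho[of a "b \<otimes>\<^bsub>W\<^esub> c"]
      double_tau_rho[of a b] by (simp add: W.m_assoc)
qed (auto simp: tau_rho_def coxeter_length_one)

lemma mem_coxeter_quandle: "x \<in> Q \<longleftrightarrow> (\<exists>w\<in>carrier W. \<exists>s\<in>S. x = inv\<^bsub>W\<^esub> w \<otimes>\<^bsub>W\<^esub> s \<otimes>\<^bsub>W\<^esub> w)"
  unfolding coxeter_quandle_def by blast

lemma coxeter_quandle_closed: "Q \<subseteq> carrier W"
  using gens_closed by (fastforce simp: mem_coxeter_quandle)

lemma gens_subset_coxeter_quandle: "S \<subseteq> Q"
proof
  fix s assume "s \<in> S"
  moreover have "s = inv\<^bsub>W\<^esub> \<one>\<^bsub>W\<^esub> \<otimes>\<^bsub>W\<^esub> s \<otimes>\<^bsub>W\<^esub> \<one>\<^bsub>W\<^esub>"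
    using calculation gens_closed by auto
  ultimately show "s \<in> Q" unfolding mem_coxeter_quandle by blast
qed

lemma coxeter_quandle_conj:
  assumes "x \<in> Q" "w \<in> carrier W"
  shows "inv\<^bsub>W\<^esub> w \<otimes>\<^bsub>W\<^esub> x \<otimes>\<^bsub>W\<^esub> w \<in> Q"
proof -
  obtain v s where v: "v \<in> carrier W" "s \<in> S" "x = inv\<^bsub>W\<^esub> v \<otimes>\<^bsub>W\<^esub> s \<otimes>\<^bsub>W\<^esub> v"
    using assms(1) mem_coxeter_quandle by blast
  then have "inv\<^bsub>W\<^esub> w \<otimes>\<^bsub>W\<^esub> x \<otimes>\<^bsub>W\<^esub> w
      = inv\<^bsub>W\<^esub> (v \<otimes>\<^bsub>W\<^esub> w) \<otimes>\<^bsub>W\<^esub> s \<otimes>\<^bsub>W\<^esub> (v \<otimes>\<^bsub>W\<^esub> w)"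
    using gens_closed assms(2) by (simp add: W.inv_mult_group W.m_assoc subset_iff)
  then show ?thesis using v assms(2) mem_coxeter_quandle by blast
qed

lemma coxeter_quandle_square:
  assumes "x \<in> Q"
  shows "x \<otimes>\<^bsub>W\<^esub> x = \<one>\<^bsub>W\<^esub>"
proof -
  obtain v s where v: "v \<in> carrier W" "s \<in> S" "x = inv\<^bsub>W\<^esub> v \<otimes>\<^bsub>W\<^esub> s \<otimes>\<^bsub>W\<^esub> v"
    using assms mem_coxeter_quandle by blast
  moreover have "s \<in> carrier W" using v gens_closed by auto
  ultimately have "x \<otimes>\<^bsub>W\<^esub> x = inv\<^bsub>W\<^esub> v \<otimes>\<^bsub>W\<^esub> (s \<otimes>\<^bsub>W\<^esub> s) \<otimes>\<^bsub>W\<^esub> v"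
    by (simp add: W.m_assoc)
  then show ?thesis using v gen_square by simp
qed

lemma coxeter_quandle_inv: "x \<in> Q \<Longrightarrow> inv\<^bsub>W\<^esub> x = x"
  using coxeter_quandle_square coxeter_quandle_closed by (intro W.inv_equality) auto

lemma quandle_op_closed:
  assumes "x \<in> Q" "y \<in> Q"
  shows "quandle_op W x y \<in> Q"
proof -
  have "quandle_op W x y = inv\<^bsub>W\<^esub> y \<otimes>\<^bsub>W\<^esub> x \<otimes>\<^bsub>W\<^esub> y"
    using coxeter_quandle_inv[OF assms(2)] by (simp add: quandle_op_def)
  then show ?thesis using coxeter_quandle_conj[OF assms(1)] assms(2) coxeter_quandle_closed by auto
qed

lemma conj_eq_of_single_class:
  assumes "coxeter_c W S = 1" "x \<in> Q" "y \<in> Q"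
  obtains w where "w \<in> carrier W" "x = inv\<^bsub>W\<^esub> w \<otimes>\<^bsub>W\<^esub> y \<otimes>\<^bsub>W\<^esub> w"
proof -
  define conj_class where "conj_class x = {inv\<^bsub>W\<^esub> w \<otimes>\<^bsub>W\<^esub> x \<otimes>\<^bsub>W\<^esub> w | w. w \<in> carrier W}" for x
  obtain C where C: "conj_class ` Q = {C}"
    using assms(1) unfolding coxeter_c_def conj_class_def by (rule card_1_singletonE)
  have "conj_class x \<in> conj_class ` Q" "conj_class y \<in> conj_class ` Q" using assms(2,3) by simp_all
  then have "conj_class x = conj_class y" unfolding C by simp
  moreover have "x \<in> conj_class x"
    unfolding conj_class_def using assms(2) coxeter_quandle_closed
    by (intro CollectI exI[of _ "\<one>\<^bsub>W\<^esub>"]) auto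
  ultimately have "x \<in> conj_class y" by simp
  then show thesis using that unfolding conj_class_def by blast
qed

lemma evW_alternating_odd:
  assumes "x \<in> Q" "y \<in> Q"
  shows "evW (alternating x y (2 * j + 1)) \<in> Q"
  using assms
proof (induction j arbitrary: x y)
  case 0
  then show ?case using coxeter_quandle_closed by (auto simp: numeral_2_eq_2)
next
  case (Suc j)
  let ?c = "evW (alternating y x (2 * j + 1))"
  have c: "?c \<in> Q" using Suc by blast
  have "{y, x} \<subseteq> carrier W" using Suc.prems coxeter_quandle_closed by auto
  with set_alternating have "set (alternating y x (2 * j + 1)) \<subseteq> carrier W"
    by (rule subset_trans)
  moreover have x: "x \<in> carrier W" using Suc.prems coxeter_quandle_closed by blast
  ultimately have eq: "evW (alternating x y (2 * Suc j + 1)) = quandle_op W ?c x"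
    unfolding alternating_odd_Suc
    by (simp add: evW_append quandle_op_def W.m_assoc evW_closed del: alternating.simps)
  show ?case unfolding eq by (rule quandle_op_closed[OF c Suc.prems(1)])
qed

end

section \<open>The adjoint group of the Coxeter quandle\<close>

locale coxeter_adjoint = coxeter +
  fixes A :: "('c, 'n) monoid_scheme" and e :: "'a \<Rightarrow> 'c" and \<phi> :: "'c \<Rightarrow> 'a"
  assumes adjoint_group: "adjoint_group W S A e"
    and \<phi>_hom: "\<phi> \<in> hom A W"
    and \<phi>_e: "\<forall>x\<in>coxeter_quandle W S. \<phi> (e x) = x"

sublocale coxeter_adjoint \<subseteq> A: group A
  using adjoint_group by (simp add: adjoint_group_def presentation_def)

sublocale coxeter_adjoint \<subseteq> \<phi>: group_hom A W \<phi>
  using adjoint_group \<phi>_hom W.group_axioms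
  by (simp add: adjoint_group_def presentation_def group_hom_def group_hom_axioms_def)

context coxeter_adjoint
begin

abbreviation "L \<equiv> Q \<times> (UNIV :: bool set)"
abbreviation "lift u \<equiv> word_eval A e u"
abbreviation "evA ws \<equiv> word_eval A (ad_letter A e) ws"

lemma presentation_A: "presentation A L (ad_letter A e) (ad_relators W Q)"
  using adjoint_group by (simp add: adjoint_group_def)

lemma ad_letter_closed: "l \<in> L \<Longrightarrow> ad_letter A e l \<in> carrier A"
  using presentation_A by (auto simp: presentation_def)

lemma ad_relator_eval: "r \<in> ad_relators W Q \<Longrightarrow> evA r = \<one>\<^bsub>A\<^esub>"
  using presentation_A by (simp add: presentation_def)

lemma e_closed: "x \<in> Q \<Longrightarrow> e x \<in> carrier A"
  using ad_letter_closed[of "(x, True)"] by (simp add: ad_letter_def)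

lemma lift_closed: "set u \<subseteq> Q \<Longrightarrow> lift u \<in> carrier A"
  using e_closed by (intro A.word_eval_closed) auto

lemma lift_append: "set u \<subseteq> Q \<Longrightarrow> set v \<subseteq> Q \<Longrightarrow> lift (u @ v) = lift u \<otimes>\<^bsub>A\<^esub> lift v"
  using e_closed by (intro A.word_eval_append) auto

lemma \<phi>_lift: "set u \<subseteq> Q \<Longrightarrow> \<phi> (lift u) = evW u"
  by (induction u) (simp_all add: e_closed lift_closed \<phi>_e)

lemma e_conj:
  assumes "x \<in> Q" "y \<in> Q"
  shows "inv\<^bsub>A\<^esub> (e y) \<otimes>\<^bsub>A\<^esub> e x \<otimes>\<^bsub>A\<^esub> e y = e (quandle_op W x y)"
proof -
  let ?q = "quandle_op W x y"
  have "[(y, False), (x, True), (y, True), (?q, False)] \<in> ad_relators W Q"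
    unfolding ad_relators_def using assms by blast
  from ad_relator_eval[OF this] have "inv\<^bsub>A\<^esub> (e y) \<otimes>\<^bsub>A\<^esub> e x \<otimes>\<^bsub>A\<^esub> e y \<otimes>\<^bsub>A\<^esub> inv\<^bsub>A\<^esub> (e ?q) = \<one>\<^bsub>A\<^esub>"
    using assms quandle_op_closed[OF assms] by (simp add: ad_letter_def e_closed A.m_assoc)
  then show ?thesis
    using A.inv_solve_right'[of "\<one>\<^bsub>A\<^esub>" "inv\<^bsub>A\<^esub> (e y) \<otimes>\<^bsub>A\<^esub> e x \<otimes>\<^bsub>A\<^esub> e y" "e ?q"]
      assms quandle_op_closed[OF assms] by (simp add: e_closed)
qed

lemma e_mult_swap:
  assumes "x \<in> Q" "y \<in> Q"
  shows "e x \<otimes>\<^bsub>A\<^esub> e y = e y \<otimes>\<^bsub>A\<^esub> e (quandle_op W x y)"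
  using e_conj[OF assms, symmetric] assms by (simp add: e_closed A.m_assoc)

lemma lift_conj:
  assumes "set u \<subseteq> Q" "x \<in> Q"
  shows "inv\<^bsub>A\<^esub> (lift u) \<otimes>\<^bsub>A\<^esub> e x \<otimes>\<^bsub>A\<^esub> lift u = e (inv\<^bsub>W\<^esub> (evW u) \<otimes>\<^bsub>W\<^esub> x \<otimes>\<^bsub>W\<^esub> evW u)"
  using assms
proof (induction u arbitrary: x)
  case Nil
  then show ?case using e_closed coxeter_quandle_closed by auto
next
  case (Cons y u)
  have y: "y \<in> Q" and u: "set u \<subseteq> Q" using Cons.prems by auto
  have uW: "set u \<subseteq> carrier W" and xyW: "x \<in> carrier W" "y \<in> carrier W"
    using u y Cons.prems coxeter_quandle_closed by auto
  have "inv\<^bsub>A\<^esub> (lift (y # u)) \<otimes>\<^bsub>A\<^esub> e x \<otimes>\<^bsub>A\<^esub> lift (y # u)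
      = inv\<^bsub>A\<^esub> (lift u) \<otimes>\<^bsub>A\<^esub> (inv\<^bsub>A\<^esub> (e y) \<otimes>\<^bsub>A\<^esub> e x \<otimes>\<^bsub>A\<^esub> e y) \<otimes>\<^bsub>A\<^esub> lift u"
    using y u Cons.prems by (simp add: e_closed lift_closed A.inv_mult_group A.m_assoc)
  also have "\<dots> = inv\<^bsub>A\<^esub> (lift u) \<otimes>\<^bsub>A\<^esub> e (quandle_op W x y) \<otimes>\<^bsub>A\<^esub> lift u"
    using e_conj[OF Cons.prems(2) y] by simp
  also have "\<dots> = e (inv\<^bsub>W\<^esub> (evW u) \<otimes>\<^bsub>W\<^esub> quandle_op W x y \<otimes>\<^bsub>W\<^esub> evW u)"
    using Cons.IH[OF u quandle_op_closed[OF Cons.prems(2) y]] .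
  also have "inv\<^bsub>W\<^esub> (evW u) \<otimes>\<^bsub>W\<^esub> quandle_op W x y \<otimes>\<^bsub>W\<^esub> evW u
      = inv\<^bsub>W\<^esub> (evW (y # u)) \<otimes>\<^bsub>W\<^esub> x \<otimes>\<^bsub>W\<^esub> evW (y # u)"
    using evW_closed[OF uW] xyW coxeter_quandle_inv[OF y]
    by (simp add: quandle_op_def W.inv_mult_group W.m_assoc)
  finally show ?case .
qed

(* e\<^sub>x e\<^sub>x lifts x x = 1, so by lift_conj conjugation by it fixes every generator. *)
lemma e_square_central:
  assumes "x \<in> Q" "g \<in> carrier A"
  shows "(e x \<otimes>\<^bsub>A\<^esub> e x) \<otimes>\<^bsub>A\<^esub> g = g \<otimes>\<^bsub>A\<^esub> (e x \<otimes>\<^bsub>A\<^esub> e x)"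
proof -
  define c where "c = e x \<otimes>\<^bsub>A\<^esub> e x"
  have c: "c \<in> carrier A" unfolding c_def using e_closed assms(1) by simp
  have e: "c \<otimes>\<^bsub>A\<^esub> e y = e y \<otimes>\<^bsub>A\<^esub> c" if y: "y \<in> Q" for y
  proof (rule A.conj_eq_imp_commute[OF _ c e_closed[OF y]])
    have "lift [x, x] = c" unfolding c_def using e_closed[OF assms(1)] by simp
    moreover have "evW [x, x] = \<one>\<^bsub>W\<^esub>"
      using coxeter_quandle_square assms(1) coxeter_quandle_closed by auto
    ultimately show "inv\<^bsub>A\<^esub> c \<otimes>\<^bsub>A\<^esub> e y \<otimes>\<^bsub>A\<^esub> c = e y"
      using lift_conj[of "[x, x]" y] y assms(1) coxeter_quandle_closed by auto
  qed
  have "c \<otimes>\<^bsub>A\<^esub> ad_letter A e l = ad_letter A e l \<otimes>\<^bsub>A\<^esub> c" if "l \<in> L" for l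
  proof (cases l)
    case (Pair y b)
    then have y: "y \<in> Q" using that by simp
    show ?thesis
    proof (cases b)
      case True
      then show ?thesis using Pair e[OF y] by (simp add: ad_letter_def)
    next
      case False
      then show ?thesis
        using Pair A.inv_commute[OF e[OF y, symmetric] e_closed[OF y] c] by (simp add: ad_letter_def)
    qed
  qed
  then show ?thesis unfolding c_def[symmetric] by (rule presentation_central[OF presentation_A c assms(2)])
qed

definition deg :: "'c \<Rightarrow> int" where
  "deg = presentation_weight A L (ad_letter A e) (\<lambda>l. if snd l then 1 else -1)"

lemma ad_relator_weight: "r \<in> ad_relators W Q \<Longrightarrow> sum_list (map (\<lambda>l. if snd l then 1 else -1 :: int) r) = 0"
  unfolding ad_relators_def by auto

lemma deg_mult: "g \<in> carrier A \<Longrightarrow> h \<in> carrier A \<Longrightarrow> deg (g \<otimes>\<^bsub>A\<^esub> h) = deg g + deg h"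
  unfolding deg_def by (rule presentation_weight_mult[OF presentation_A ad_relator_weight])

lemma deg_lift:
  assumes "set u \<subseteq> Q"
  shows "deg (lift u) = int (length u)"
proof -
  have "lift u = evA (map (\<lambda>x. (x, True)) u)" by (induction u) (simp_all add: ad_letter_def)
  moreover have "sum_list (map (\<lambda>l. if snd l then 1 else -1 :: int) (map (\<lambda>x. (x, True)) u)) = int (length u)"
    by (induction u) auto
  ultimately show ?thesis
    using presentation_weight_word_eval[OF presentation_A ad_relator_weight, of "map (\<lambda>x. (x, True)) u"] assms
    unfolding deg_def by auto
qed

lemma deg_e: "x \<in> Q \<Longrightarrow> deg (e x) = 1"
  using deg_lift[of "[x]"] e_closed by simp

lemma deg_one: "deg \<one>\<^bsub>A\<^esub> = 0"
  using deg_lift[of "[]"] by simp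

lemma deg_inv: "g \<in> carrier A \<Longrightarrow> deg (inv\<^bsub>A\<^esub> g) = - deg g"
  using deg_mult[of g "inv\<^bsub>A\<^esub> g"] deg_one by simp

lemma deg_int_pow:
  assumes "g \<in> carrier A"
  shows "deg (g [^]\<^bsub>A\<^esub> (n::int)) = n * deg g"
proof -
  have nat: "deg (g [^]\<^bsub>A\<^esub> k) = int k * deg g" for k :: nat
    by (induction k) (simp_all add: deg_one deg_mult assms algebra_simps)
  show ?thesis
  proof (cases n rule: int_cases2)
    case (nonneg k)
    then show ?thesis using nat[of k] by (simp only: int_pow_int)
  next
    case (nonpos k)
    then show ?thesis using nat[of k] deg_inv assms by (simp add: A.int_pow_neg_int)
  qed
qed

end

locale coxeter_adjoint_single_class = coxeter_adjoint +
  fixes s0 :: 'a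
  assumes single_class: "coxeter_c W S = 1" and s0: "s0 \<in> S"

context coxeter_adjoint_single_class
begin

abbreviation "z \<equiv> e s0 \<otimes>\<^bsub>A\<^esub> e s0"
abbreviation "zpow (n::int) \<equiv> z [^]\<^bsub>A\<^esub> n"

lemma s0_quandle: "s0 \<in> Q"
  using s0 gens_subset_coxeter_quandle by blast

lemma z_closed: "z \<in> carrier A"
  using e_closed s0_quandle by simp

lemma zpow_add: "zpow (a + b) = zpow a \<otimes>\<^bsub>A\<^esub> zpow b"
  using A.int_pow_mult z_closed by blast

lemma zpow_central: "g \<in> carrier A \<Longrightarrow> zpow n \<otimes>\<^bsub>A\<^esub> g = g \<otimes>\<^bsub>A\<^esub> zpow n"
  using A.int_pow_commute e_square_central[OF s0_quandle] z_closed by blast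

lemma deg_zpow: "deg (zpow n) = 2 * n"
  using deg_int_pow[OF z_closed] deg_mult deg_e e_closed s0_quandle by simp

lemma zpow_inj:
  assumes "zpow a = zpow b"
  shows "a = b"
proof -
  have "deg (zpow a) = deg (zpow b)" using assms by (rule arg_cong)
  then show ?thesis by (simp only: deg_zpow)
qed

lemma \<phi>_zpow: "\<phi> (zpow n) = \<one>\<^bsub>W\<^esub>"
proof -
  have "\<phi> z = \<one>\<^bsub>W\<^esub>" using \<phi>_e s0_quandle e_closed gen_square[OF s0] by simp
  then show ?thesis using \<phi>.hom_int_pow[OF z_closed] by simp
qed

(* Here c(W) = 1 enters: x is conjugate to s0, and conjugation fixes the central z. *)
lemma e_square:
  assumes "x \<in> Q"
  shows "e x \<otimes>\<^bsub>A\<^esub> e x = z"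
proof -
  obtain w where w: "w \<in> carrier W" "x = inv\<^bsub>W\<^esub> w \<otimes>\<^bsub>W\<^esub> s0 \<otimes>\<^bsub>W\<^esub> w"
    using conj_eq_of_single_class[OF single_class assms s0_quandle] .
  obtain u where u: "set u \<subseteq> S" "evW u = w" using exists_word w(1) by blast
  then have uQ: "set u \<subseteq> Q" using gens_subset_coxeter_quandle by auto
  note closed = lift_closed[OF uQ] e_closed[OF s0_quandle]
  have ex: "e x = inv\<^bsub>A\<^esub> (lift u) \<otimes>\<^bsub>A\<^esub> e s0 \<otimes>\<^bsub>A\<^esub> lift u"
    using lift_conj[OF uQ s0_quandle] u w by simp
  have "e s0 \<otimes>\<^bsub>A\<^esub> (e s0 \<otimes>\<^bsub>A\<^esub> lift u) = lift u \<otimes>\<^bsub>A\<^esub> z"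
    using e_square_central[OF s0_quandle closed(1)] closed by (simp add: A.m_assoc)
  then show ?thesis unfolding ex using closed by (simp add: A.m_assoc)
qed

lemma e_inv:
  assumes "x \<in> Q"
  shows "inv\<^bsub>A\<^esub> (e x) = zpow (-1) \<otimes>\<^bsub>A\<^esub> e x"
proof -
  have "(zpow (-1) \<otimes>\<^bsub>A\<^esub> e x) \<otimes>\<^bsub>A\<^esub> e x = \<one>\<^bsub>A\<^esub>"
    using e_square[OF assms] e_closed[OF assms] z_closed by (simp add: A.m_assoc A.int_pow_neg)
  then show ?thesis using e_closed[OF assms] z_closed by (intro A.inv_equality) auto
qed

lemma zpow_lift_mult:
  assumes "set u \<subseteq> Q" "set v \<subseteq> Q"
  shows "(zpow a \<otimes>\<^bsub>A\<^esub> lift u) \<otimes>\<^bsub>A\<^esub> (zpow b \<otimes>\<^bsub>A\<^esub> lift v) = zpow (a + b) \<otimes>\<^bsub>A\<^esub> lift (u @ v)"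
proof -
  note closed = lift_closed[OF assms(1)] lift_closed[OF assms(2)] A.int_pow_closed[OF z_closed]
  have "(zpow a \<otimes>\<^bsub>A\<^esub> lift u) \<otimes>\<^bsub>A\<^esub> (zpow b \<otimes>\<^bsub>A\<^esub> lift v)
      = zpow a \<otimes>\<^bsub>A\<^esub> (lift u \<otimes>\<^bsub>A\<^esub> zpow b) \<otimes>\<^bsub>A\<^esub> lift v"
    using closed by (simp add: A.m_assoc)
  also have "\<dots> = zpow a \<otimes>\<^bsub>A\<^esub> (zpow b \<otimes>\<^bsub>A\<^esub> lift u) \<otimes>\<^bsub>A\<^esub> lift v"
    by (simp only: zpow_central[OF closed(1), symmetric])
  also have "\<dots> = (zpow a \<otimes>\<^bsub>A\<^esub> zpow b) \<otimes>\<^bsub>A\<^esub> (lift u \<otimes>\<^bsub>A\<^esub> lift v)"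
    using closed by (simp add: A.m_assoc)
  finally show ?thesis using assms by (simp add: zpow_add lift_append)
qed

lemma lift_inv: "set u \<subseteq> Q \<Longrightarrow> inv\<^bsub>A\<^esub> (lift u) = zpow (- int (length u)) \<otimes>\<^bsub>A\<^esub> lift (rev u)"
proof (induction u)
  case (Cons x u)
  then have x: "x \<in> Q" and u: "set u \<subseteq> Q" by auto
  have "inv\<^bsub>A\<^esub> (lift (x # u)) = inv\<^bsub>A\<^esub> (lift u) \<otimes>\<^bsub>A\<^esub> inv\<^bsub>A\<^esub> (e x)"
    using e_closed[OF x] lift_closed[OF u] by (simp add: A.inv_mult_group)
  also have "\<dots> = (zpow (- int (length u)) \<otimes>\<^bsub>A\<^esub> lift (rev u)) \<otimes>\<^bsub>A\<^esub> (zpow (-1) \<otimes>\<^bsub>A\<^esub> lift [x])"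
    using Cons.IH[OF u] e_inv[OF x] e_closed[OF x] by simp
  also have "\<dots> = zpow (- int (length (x # u))) \<otimes>\<^bsub>A\<^esub> lift (rev (x # u))"
    using zpow_lift_mult[of "rev u" "[x]"] u x by (simp add: algebra_simps)
  finally show ?case .
qed simp

lemma e_normal_form:
  assumes "x \<in> Q"
  obtains n u where "set u \<subseteq> S" "e x = zpow n \<otimes>\<^bsub>A\<^esub> lift u"
proof -
  obtain w s where ws: "w \<in> carrier W" "s \<in> S" "x = inv\<^bsub>W\<^esub> w \<otimes>\<^bsub>W\<^esub> s \<otimes>\<^bsub>W\<^esub> w"
    using assms mem_coxeter_quandle by blast
  obtain v where v: "set v \<subseteq> S" "evW v = w" using exists_word ws(1) by blast
  have vQ: "set v \<subseteq> Q" and sQ: "s \<in> Q" using v ws gens_subset_coxeter_quandle by auto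
  have rsQ: "set (rev v) \<subseteq> Q" "set [s] \<subseteq> Q" "set (rev v @ [s]) \<subseteq> Q" using vQ sQ by auto
  have "e x = inv\<^bsub>A\<^esub> (lift v) \<otimes>\<^bsub>A\<^esub> e s \<otimes>\<^bsub>A\<^esub> lift v"
    using lift_conj[OF vQ sQ] v ws by simp
  also have "\<dots> = ((zpow (- int (length v)) \<otimes>\<^bsub>A\<^esub> lift (rev v)) \<otimes>\<^bsub>A\<^esub> (zpow 0 \<otimes>\<^bsub>A\<^esub> lift [s]))
      \<otimes>\<^bsub>A\<^esub> (zpow 0 \<otimes>\<^bsub>A\<^esub> lift v)"
    using lift_inv[OF vQ] e_closed[OF sQ] lift_closed[OF vQ] by simp
  also have "\<dots> = zpow (- int (length v)) \<otimes>\<^bsub>A\<^esub> lift (rev v @ [s] @ v)"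
    by (simp only: zpow_lift_mult[OF rsQ(1,2)] zpow_lift_mult[OF rsQ(3) vQ] add_0_right append_assoc)
  finally have "e x = zpow (- int (length v)) \<otimes>\<^bsub>A\<^esub> lift (rev v @ [s] @ v)" .
  then show thesis using v(1) ws(2) by (intro that[of "rev v @ [s] @ v"]) auto
qed

lemma normal_form:
  assumes "g \<in> carrier A"
  obtains n u where "set u \<subseteq> S" "g = zpow n \<otimes>\<^bsub>A\<^esub> lift u"
proof -
  have letter: "\<exists>n u. set u \<subseteq> S \<and> ad_letter A e l = zpow n \<otimes>\<^bsub>A\<^esub> lift u" if "l \<in> L" for l
  proof -
    obtain x b where l: "l = (x, b)" "x \<in> Q" using \<open>l \<in> L\<close> by auto
    obtain n u where u: "set u \<subseteq> S" "e x = zpow n \<otimes>\<^bsub>A\<^esub> lift u" using e_normal_form[OF l(2)] .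
    have "inv\<^bsub>A\<^esub> (e x) = (zpow (-1) \<otimes>\<^bsub>A\<^esub> lift []) \<otimes>\<^bsub>A\<^esub> (zpow n \<otimes>\<^bsub>A\<^esub> lift u)"
      using e_inv[OF l(2)] u z_closed by simp
    also have "\<dots> = zpow (-1 + n) \<otimes>\<^bsub>A\<^esub> lift u"
      using zpow_lift_mult[of "[]" u] u gens_subset_coxeter_quandle by auto
    finally show ?thesis using u l by (cases b) (auto simp: ad_letter_def)
  qed
  obtain ws where ws: "set ws \<subseteq> L" "evA ws = g" using presentation_A assms by (auto simp: presentation_def)
  have "\<exists>n u. set u \<subseteq> S \<and> evA ws = zpow n \<otimes>\<^bsub>A\<^esub> lift u" using ws(1)
  proof (induction ws)
    case Nil
    show ?case by (intro exI[of _ 0] exI[of _ "[]"]) simp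
  next
    case (Cons l ws)
    obtain n u where u: "set u \<subseteq> S" "evA ws = zpow n \<otimes>\<^bsub>A\<^esub> lift u" using Cons by auto
    have "l \<in> L" using Cons.prems by simp
    then obtain k v where v: "set v \<subseteq> S" "ad_letter A e l = zpow k \<otimes>\<^bsub>A\<^esub> lift v"
      using letter by blast
    have "evA (l # ws) = zpow (k + n) \<otimes>\<^bsub>A\<^esub> lift (v @ u)"
      using zpow_lift_mult[of v u k n] u v gens_subset_coxeter_quandle by auto
    then show ?case using u v by (intro exI[of _ "k + n"] exI[of _ "v @ u"]) auto
  qed
  then show thesis using that ws by auto
qed

lemma lift_alternating_odd:
  assumes "x \<in> Q" "y \<in> Q"
  shows "lift (alternating x y (2 * j + 1)) = zpow (int j) \<otimes>\<^bsub>A\<^esub> e (evW (alternating x y (2 * j + 1)))"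
  using assms
proof (induction j arbitrary: x y)
  case 0
  then have "x \<in> carrier W" using coxeter_quandle_closed by blast
  then show ?case using e_closed[OF "0.prems"(1)] by (simp add: numeral_2_eq_2)
next
  case (Suc j)
  define w where "w = alternating y x (2 * j + 1)"
  define c where "c = evW w"
  have IH: "lift w = zpow (int j) \<otimes>\<^bsub>A\<^esub> e c"
    unfolding w_def c_def by (rule Suc.IH[OF Suc.prems(2,1)])
  have c: "c \<in> Q" unfolding c_def w_def using evW_alternating_odd Suc.prems by blast
  have "{y, x} \<subseteq> Q" using Suc.prems by simp
  with set_alternating have wQ: "set w \<subseteq> Q" unfolding w_def by (rule subset_trans)
  from wQ coxeter_quandle_closed have wW: "set w \<subseteq> carrier W" by (rule subset_trans)
  note closed = e_closed[OF Suc.prems(1)] e_closed[OF c] A.int_pow_closed[OF z_closed]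
    e_closed[OF quandle_op_closed[OF c Suc.prems(1)]]
  have "lift (x # w @ [x]) = e x \<otimes>\<^bsub>A\<^esub> (zpow (int j) \<otimes>\<^bsub>A\<^esub> (e c \<otimes>\<^bsub>A\<^esub> e x))"
    using IH lift_append[OF wQ, of "[x]"] Suc.prems closed by (simp add: A.m_assoc)
  also have "\<dots> = (e x \<otimes>\<^bsub>A\<^esub> zpow (int j)) \<otimes>\<^bsub>A\<^esub> (e x \<otimes>\<^bsub>A\<^esub> e (quandle_op W c x))"
    using e_mult_swap[OF c Suc.prems(1)] closed by (simp add: A.m_assoc)
  also have "\<dots> = (zpow (int j) \<otimes>\<^bsub>A\<^esub> e x) \<otimes>\<^bsub>A\<^esub> (e x \<otimes>\<^bsub>A\<^esub> e (quandle_op W c x))"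
    by (simp only: zpow_central[OF closed(1)])
  also have "\<dots> = zpow (int j) \<otimes>\<^bsub>A\<^esub> (e x \<otimes>\<^bsub>A\<^esub> e x) \<otimes>\<^bsub>A\<^esub> e (quandle_op W c x)"
    using closed by (simp add: A.m_assoc)
  also have "\<dots> = zpow (int (Suc j)) \<otimes>\<^bsub>A\<^esub> e (quandle_op W c x)"
    using e_square[OF Suc.prems(1)] zpow_add[of "int j" 1] z_closed by (simp add: add.commute)
  also have "quandle_op W c x = evW (x # w @ [x])"
    unfolding c_def using wW Suc.prems(1) coxeter_quandle_closed
    by (simp add: quandle_op_def evW_append evW_closed W.m_assoc subset_iff)
  finally show ?case unfolding alternating_odd_Suc w_def .
qed

(* (st)\<^sup>k is an odd alternating word followed by t; the odd word evaluates to a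
   reflection, which must be t because the relator evaluates to 1. *)
lemma lift_coxeter_relator:
  assumes "r \<in> coxeter_relators S m"
  shows "lift r \<in> range zpow"
proof -
  obtain s t k where r: "r = concat (replicate k [s, t])" "s \<in> S" "t \<in> S"
    using assms unfolding coxeter_relators_def by blast
  show ?thesis
  proof (cases k)
    case 0
    then show ?thesis using r by (auto intro: range_eqI[of _ _ 0])
  next
    case (Suc k')
    define w where "w = alternating s t (2 * k' + 1)"
    define c where "c = evW w"
    have st: "s \<in> Q" "t \<in> Q" using r gens_subset_coxeter_quandle by auto
    have c: "c \<in> Q" unfolding c_def w_def using evW_alternating_odd st by blast
    have "{s, t} \<subseteq> Q" using st by simp
    with set_alternating have wQ: "set w \<subseteq> Q" unfolding w_def by (rule subset_trans)
    from wQ coxeter_quandle_closed have wW: "set w \<subseteq> carrier W" by (rule subset_trans)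
    have tW: "t \<in> carrier W" "c \<in> carrier W" using st c coxeter_quandle_closed by auto
    have "2 * k = Suc (2 * k' + 1)" using Suc by simp
    then have r_eq: "r = w @ [t]"
      unfolding r(1) concat_replicate_alternating w_def by (simp only: alternating_Suc_snoc) simp
    have "c \<otimes>\<^bsub>W\<^esub> t = \<one>\<^bsub>W\<^esub>"
      using coxeter_relator[OF assms] evW_append[OF wW, of "[t]"] tW unfolding r_eq c_def by simp
    then have "c = t" using W.inv_equality[of c t] coxeter_quandle_inv[OF st(2)] tW by simp
    then have "lift r = zpow (int k') \<otimes>\<^bsub>A\<^esub> (e t \<otimes>\<^bsub>A\<^esub> e t)"
      using lift_append[OF wQ, of "[t]"] lift_alternating_odd[OF st, of k', folded w_def c_def]
        st e_closed z_closed unfolding r_eq by (simp add: A.m_assoc)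
    also have "\<dots> = zpow (int k' + 1)"
      using e_square[OF st(2)] zpow_add[of "int k'" 1] z_closed by simp
    finally show ?thesis by blast
  qed
qed

lemma zpow_mult_in_range_iff:
  assumes "g \<in> carrier A"
  shows "zpow k \<otimes>\<^bsub>A\<^esub> g \<in> range zpow \<longleftrightarrow> g \<in> range zpow"
proof
  assume "zpow k \<otimes>\<^bsub>A\<^esub> g \<in> range zpow"
  then obtain n where n: "zpow k \<otimes>\<^bsub>A\<^esub> g = zpow n" by auto
  have "g = zpow (- k) \<otimes>\<^bsub>A\<^esub> zpow n"
    using n assms z_closed by (simp add: A.int_pow_neg A.inv_solve_left)
  then show "g \<in> range zpow" by (simp add: zpow_add[symmetric])
next
  assume "g \<in> range zpow"
  then show "zpow k \<otimes>\<^bsub>A\<^esub> g \<in> range zpow" by (auto simp: zpow_add[symmetric])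
qed

lemma lift_word_rel:
  assumes "word_rel (coxeter_relators S m) u []" "set u \<subseteq> S"
  shows "lift u \<in> range zpow"
proof -
  (* Filtering makes the invariant meaningful on all words of the congruence, not only on
     words over S. *)
  let ?F = "\<lambda>w. lift (filter (\<lambda>x. x \<in> S) w) \<in> range zpow"
  have "?F u = ?F []"
  proof (rule word_rel_invariant[OF _ assms(1)])
    fix a b r assume r: "r \<in> coxeter_relators S m"
    then have "set r \<subseteq> S" using coxeter_relator by blast
    then have rf: "filter (\<lambda>x. x \<in> S) r = r" by (simp add: filter_id_conv subset_iff)
    obtain k where k: "lift r = zpow k" using lift_coxeter_relator[OF r] by auto
    let ?a = "filter (\<lambda>x. x \<in> S) a" and ?b = "filter (\<lambda>x. x \<in> S) b"
    have ab: "set ?a \<subseteq> Q" "set ?b \<subseteq> Q" "set r \<subseteq> Q"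
      using \<open>set r \<subseteq> S\<close> gens_subset_coxeter_quandle by auto
    have "lift (filter (\<lambda>x. x \<in> S) (a @ r @ b)) = lift ?a \<otimes>\<^bsub>A\<^esub> (zpow k \<otimes>\<^bsub>A\<^esub> lift ?b)"
      using rf k ab lift_append by simp
    also have "\<dots> = zpow k \<otimes>\<^bsub>A\<^esub> lift (filter (\<lambda>x. x \<in> S) (a @ b))"
      using zpow_lift_mult[OF ab(1,2), of 0 k] ab lift_closed by simp
    finally show "?F (a @ r @ b) = ?F (a @ b)"
      using zpow_mult_in_range_iff lift_closed ab by simp
  qed
  moreover have "?F []" by (auto intro: range_eqI[of _ _ 0])
  ultimately show ?thesis using assms(2) by (simp add: filter_id_conv subset_iff)
qed

lemma kernel_zpow:
  assumes "g \<in> carrier A" "\<phi> g = \<one>\<^bsub>W\<^esub>"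
  shows "g \<in> range zpow"
proof -
  obtain n u where u: "set u \<subseteq> S" "g = zpow n \<otimes>\<^bsub>A\<^esub> lift u" using normal_form[OF assms(1)] .
  have uQ: "set u \<subseteq> Q" using u gens_subset_coxeter_quandle by auto
  have "evW u \<in> carrier W" using u(1) gens_closed by (intro evW_closed) auto
  then have "evW u = \<one>\<^bsub>W\<^esub>" using assms(2) u \<phi>_zpow \<phi>_lift[OF uQ] lift_closed[OF uQ] z_closed
    by auto
  then have "lift u \<in> range zpow"
    using lift_word_rel u presentation_W by (auto simp: presentation_def)
  then show ?thesis using u zpow_mult_in_range_iff lift_closed[OF uQ] by simp
qed

lemma even_deg:
  assumes "g \<in> carrier A"
  shows "even (deg g) = even (len (\<phi> g))"
proof -
  obtain n u where u: "set u \<subseteq> S" "g = zpow n \<otimes>\<^bsub>A\<^esub> lift u" using normal_form[OF assms] .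
  have uQ: "set u \<subseteq> Q" using u gens_subset_coxeter_quandle by auto
  have "evW u \<in> carrier W" using u(1) gens_closed by (intro evW_closed) auto
  then have "\<phi> g = evW u" using u \<phi>_zpow \<phi>_lift[OF uQ] lift_closed[OF uQ] z_closed by simp
  moreover have "deg g = 2 * n + int (length u)"
    using u deg_mult deg_zpow deg_lift[OF uQ] lift_closed[OF uQ] z_closed by simp
  ultimately show ?thesis using even_coxeter_length_eval[OF u(1)] by simp
qed

lemma extension_cocycle_eq:
  assumes \<sigma>: "\<forall>w\<in>carrier W. \<sigma> w \<in> carrier A \<and> \<phi> (\<sigma> w) = w"
    and ab: "a \<in> carrier W" "b \<in> carrier W"
  shows "\<sigma> a \<otimes>\<^bsub>A\<^esub> \<sigma> b = zpow (extension_cocycle W A z \<sigma> a b) \<otimes>\<^bsub>A\<^esub> \<sigma> (a \<otimes>\<^bsub>W\<^esub> b)"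
proof -
  have closed: "\<sigma> a \<in> carrier A" "\<sigma> b \<in> carrier A" "\<sigma> (a \<otimes>\<^bsub>W\<^esub> b) \<in> carrier A"
    using \<sigma> ab by auto
  let ?k = "\<sigma> a \<otimes>\<^bsub>A\<^esub> \<sigma> b \<otimes>\<^bsub>A\<^esub> inv\<^bsub>A\<^esub> (\<sigma> (a \<otimes>\<^bsub>W\<^esub> b))"
  have "\<phi> ?k = \<one>\<^bsub>W\<^esub>" using \<sigma> ab closed by simp
  then obtain n where "?k = zpow n" using kernel_zpow closed by blast
  then have n: "\<sigma> a \<otimes>\<^bsub>A\<^esub> \<sigma> b = zpow n \<otimes>\<^bsub>A\<^esub> \<sigma> (a \<otimes>\<^bsub>W\<^esub> b)"
    by (rule A.inv_solve_right'[OF A.int_pow_closed[OF z_closed] A.m_closed[OF closed(1,2)] closed(3),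
          THEN iffD1])
  have "extension_cocycle W A z \<sigma> a b = n"
    unfolding extension_cocycle_def
  proof (rule the_equality)
    fix n' assume "\<sigma> a \<otimes>\<^bsub>A\<^esub> \<sigma> b = zpow n' \<otimes>\<^bsub>A\<^esub> \<sigma> (a \<otimes>\<^bsub>W\<^esub> b)"
    then have "zpow n' = zpow n" using n closed z_closed A.r_cancel by auto
    then show "n' = n" by (rule zpow_inj)
  qed (rule n)
  then show ?thesis using n by simp
qed

lemma double_extension_cocycle:
  assumes \<sigma>: "\<forall>w\<in>carrier W. \<sigma> w \<in> carrier A \<and> \<phi> (\<sigma> w) = w"
    and ab: "a \<in> carrier W" "b \<in> carrier W"
  shows "2 * extension_cocycle W A z \<sigma> a b = deg (\<sigma> a) + deg (\<sigma> b) - deg (\<sigma> (a \<otimes>\<^bsub>W\<^esub> b))"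
  using arg_cong[OF extension_cocycle_eq[OF assms], of deg] \<sigma> ab z_closed
  by (simp add: deg_mult deg_zpow)

lemma tau_rho_cohomologous_extension_cocycle:
  assumes \<sigma>: "\<forall>w\<in>carrier W. \<sigma> w \<in> carrier A \<and> \<phi> (\<sigma> w) = w"
  shows "cohomologous W (tau_rho W S) (extension_cocycle W A z \<sigma>)"
proof -
  define c where "c w = (of_bool (odd (len w)) - deg (\<sigma> w)) div 2" for w
  (* The division is exact by even_deg. *)
  have c: "2 * c w = of_bool (odd (len w)) - deg (\<sigma> w)" if "w \<in> carrier W" for w
    using even_deg[of "\<sigma> w"] \<sigma> that unfolding c_def by auto
  show ?thesis
    unfolding cohomologous_def
  proof (intro exI[of _ c] ballI)
    fix a b assume ab: "a \<in> carrier W" "b \<in> carrier W"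
    show "tau_rho W S a b - extension_cocycle W A z \<sigma> a b = c a + c b - c (a \<otimes>\<^bsub>W\<^esub> b)"
      using double_tau_rho[OF ab] double_extension_cocycle[OF \<sigma> ab] c[OF ab(1)] c[OF ab(2)]
        c[OF W.m_closed[OF ab]] by linarith
  qed
qed

end

theorem theorem4p8:
  fixes W :: "('a, 'm) monoid_scheme" and S :: "'a set" and m :: "'a \<Rightarrow> 'a \<Rightarrow> enat"
    and A :: "('b, 'n) monoid_scheme" and e :: "'a \<Rightarrow> 'b" and \<phi> :: "'b \<Rightarrow> 'a" and s0 :: 'a
  assumes "coxeter_system W S m"
    and "finite S"
    and "coxeter_c W S = 1"
    and "adjoint_group W S A e"
    and "\<phi> \<in> hom A W"
    and "\<forall>x\<in>coxeter_quandle W S. \<phi> (e x) = x"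
    and "s0 \<in> S"
  shows "normalized_2cocycle W (tau_rho W S)
    \<and> (\<forall>\<sigma>. (\<forall>w\<in>carrier W. \<sigma> w \<in> carrier A \<and> \<phi> (\<sigma> w) = w)
          \<longrightarrow> cohomologous W (tau_rho W S) (extension_cocycle W A (e s0 \<otimes>\<^bsub>A\<^esub> e s0) \<sigma>))"
proof -
  interpret coxeter_adjoint_single_class W S m A e \<phi> s0
    using assms by unfold_locales
  show ?thesis
    using tau_rho_normalized_2cocycle tau_rho_cohomologous_extension_cocycle by blast
qed

end
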